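(* Let $\gamma\geq0$, $G=(V,E,\omega)\in\mathcal C_\gamma$, and let $V'$ be a proper subset of $V$. Assume $u,v\in\mathcal V$ satisfy $(Lu)_i\geq(Lv)_i$ for all $i\in V'$ and $u_i\geq v_i$ for all $i\in V\setminus V'$. Then $u_i\geq v_i$ for all $i\in V$.
   Context: $\mathcal{G}$ is the set of finite, simple, connected, undirected, edge-weighted graphs $G=(V,E,\omega)$ with $V=\{1,\dots,n\}$, $n\geq2$, weights $\omega_{ij}=\omega_{ji}>0$ on edges, $0$ otherwise. $d_i=\sum_j\omega_{ij}$. $\mathcal V$: functions $V\to\mathbb R$. Fixed $r\in[0,1]$: $(\Delta u)_i=d_i^{-r}\sum_j\omega_{ij}(u_i-u_j)$, $\mathcal M(u)=\sum_id_i^ru_i$, $\mathrm{vol}(V)=\sum_id_i^r$, $\mathcal A(u)=\frac{\mathcal M(u)}{\mathrm{vol}(V)}\chi_V$. For $u\in\mathcal V$ let $\varphi$ be the unique solution of $\Delta\varphi=u-\mathcal A(u)$, $\mathcal M(\varphi)=0$, and $Lu:=\Delta u+\gamma\varphi$. For a proper subset $S\subsetneq V$, the equilibrium measure $\nu^S$ is the unique $\nu\in\mathcal V$ with $(\Delta\nu)_i=1$ on $S$ and $\nu_i=0$ off $S$. $f^j:=\nu^{V\setminus\{j\}}-\mathcal A(\nu^{V\setminus\{j\}})$. $\mathcal C^0=\{G\in\mathcal G:\forall j\ \forall i\neq j:\ \omega_{ij}>0\text{ or }f^j_i\geq0\}$; for $\gamma>0$, $\mathcal C_\gamma=\{G\in\mathcal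 C^0:\forall j\ \forall i\neq j:\ \omega_{ij}=0\text{ or }d_i^{-r}\omega_{ij}+\gamma\frac{d_j^r}{\mathrm{vol}(V)}f^j_i>0\}$; $\mathcal C_0:=\mathcal G$. *)

theory Defs
  imports "HOL-Analysis.Analysis"
begin

text \<open>A weighted graph on vertex set V = {1..n} is given by a weight function
  w :: nat => nat => real; only values on V x V matter. The exponent r is a parameter.\<close>

definition Vset :: "nat \<Rightarrow> nat set" where
  "Vset n = {1..n}"

definition is_graph :: "nat \<Rightarrow> (nat \<Rightarrow> nat \<Rightarrow> real) \<Rightarrow> bool" where
  "is_graph n w \<longleftrightarrow> n \<ge> 2
     \<and> (\<forall>i\<in>Vset n. \<forall>j\<in>Vset n. w i j = w j i \<and> w i j \<ge> 0)
     \<and> (\<forall>i\<in>Vset n. w i i = 0)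
     \<and> (\<forall>i\<in>Vset n. \<forall>j\<in>Vset n.
          (i, j) \<in> ({(a, b). a \<in> Vset n \<and> b \<in> Vset n \<and> w a b > 0})\<^sup>*)"

definition deg :: "nat \<Rightarrow> (nat \<Rightarrow> nat \<Rightarrow> real) \<Rightarrow> nat \<Rightarrow> real" where
  "deg n w i = (\<Sum>j\<in>Vset n. w i j)"

definition lap :: "nat \<Rightarrow> (nat \<Rightarrow> nat \<Rightarrow> real) \<Rightarrow> real \<Rightarrow> (nat \<Rightarrow> real) \<Rightarrow> nat \<Rightarrow> real" where
  "lap n w r u i = deg n w i powr (- r) * (\<Sum>j\<in>Vset n. w i j * (u i - u j))"

definition mass :: "nat \<Rightarrow> (nat \<Rightarrow> nat \<Rightarrow> real) \<Rightarrow> real \<Rightarrow> (nat \<Rightarrow> real) \<Rightarrow> real" where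
  "mass n w r u = (\<Sum>i\<in>Vset n. deg n w i powr r * u i)"

definition vol :: "nat \<Rightarrow> (nat \<Rightarrow> nat \<Rightarrow> real) \<Rightarrow> real \<Rightarrow> real" where
  "vol n w r = (\<Sum>i\<in>Vset n. deg n w i powr r)"

definition avg :: "nat \<Rightarrow> (nat \<Rightarrow> nat \<Rightarrow> real) \<Rightarrow> real \<Rightarrow> (nat \<Rightarrow> real) \<Rightarrow> nat \<Rightarrow> real" where
  "avg n w r u = (\<lambda>i. if i \<in> Vset n then mass n w r u / vol n w r else 0)"

text \<open>phi: the unique solution of Delta phi = u - A(u) on V, M(phi) = 0
  (functions are normalised to be 0 outside V so that THE is well-defined).\<close>
definition phi :: "nat \<Rightarrow> (nat \<Rightarrow> nat \<Rightarrow> real) \<Rightarrow> real \<Rightarrow> (nat \<Rightarrow> real) \<Rightarrow> nat \<Rightarrow> real" where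
  "phi n w r u = (THE p. (\<forall>i\<in>Vset n. lap n w r p i = u i - avg n w r u i)
                        \<and> mass n w r p = 0 \<and> (\<forall>i. i \<notin> Vset n \<longrightarrow> p i = 0))"

definition Lop :: "nat \<Rightarrow> (nat \<Rightarrow> nat \<Rightarrow> real) \<Rightarrow> real \<Rightarrow> real \<Rightarrow> (nat \<Rightarrow> real) \<Rightarrow> nat \<Rightarrow> real" where
  "Lop n w r \<gamma> u i = lap n w r u i + \<gamma> * phi n w r u i"

definition eqmeas :: "nat \<Rightarrow> (nat \<Rightarrow> nat \<Rightarrow> real) \<Rightarrow> real \<Rightarrow> nat set \<Rightarrow> nat \<Rightarrow> real" where
  "eqmeas n w r S = (THE \<nu>. (\<forall>i\<in>S. lap n w r \<nu> i = 1) \<and> (\<forall>i. i \<notin> S \<longrightarrow> \<nu> i = 0))"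

definition fj :: "nat \<Rightarrow> (nat \<Rightarrow> nat \<Rightarrow> real) \<Rightarrow> real \<Rightarrow> nat \<Rightarrow> nat \<Rightarrow> real" where
  "fj n w r j = (let \<nu> = eqmeas n w r (Vset n - {j}) in (\<lambda>i. \<nu> i - avg n w r \<nu> i))"

definition classC0 :: "nat \<Rightarrow> (nat \<Rightarrow> nat \<Rightarrow> real) \<Rightarrow> real \<Rightarrow> bool" where
  "classC0 n w r \<longleftrightarrow> is_graph n w \<and>
     (\<forall>j\<in>Vset n. \<forall>i\<in>Vset n. i \<noteq> j \<longrightarrow> w i j > 0 \<or> fj n w r j i \<ge> 0)"

definition classC :: "nat \<Rightarrow> (nat \<Rightarrow> nat \<Rightarrow> real) \<Rightarrow> real \<Rightarrow> real \<Rightarrow> bool" where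
  "classC n w r \<gamma> \<longleftrightarrow>
     (if \<gamma> = 0 then is_graph n w
      else classC0 n w r \<and>
        (\<forall>j\<in>Vset n. \<forall>i\<in>Vset n. i \<noteq> j \<longrightarrow>
           w i j = 0 \<or> deg n w i powr (- r) * w i j
                        + \<gamma> * deg n w j powr r / vol n w r * fj n w r j i > 0))"

end

theory Submission
  imports Defs "Jordan_Normal_Form.Determinant"
begin

text \<open>The solution operator \<open>u \<mapsto> \<phi>\<close> of \<open>\<Delta>\<phi> = u - \<A>(u)\<close>, \<open>\<M>(\<phi>) = 0\<close> is explicit:
  \<open>\<phi>(u) = - \<Sum>\<^sub>j u\<^sub>j (d\<^sub>j\<^sup>r / vol V) f\<^sup>j\<close>, and since \<open>\<phi>\<close> of a constant vanishes,
  \<open>\<Sum>\<^sub>j (d\<^sub>j\<^sup>r / vol V) f\<^sup>j\<^sub>i = 0\<close>. Hence \<open>(L u)\<^sub>i = \<Sum>\<^sub>k c\<^sub>i\<^sub>k (u\<^sub>i - u\<^sub>k)\<close> with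
  \<open>c\<^sub>i\<^sub>k = d\<^sub>i\<^sup>-\<^sup>r \<omega>\<^sub>i\<^sub>k + \<gamma> (d\<^sub>k\<^sup>r / vol V) f\<^sup>k\<^sub>i\<close>. Membership in \<open>\<C>\<^sub>\<gamma>\<close> says exactly that
  these coefficients are nonnegative off the diagonal and positive along edges, so \<open>L\<close> obeys the
  minimum principle of a Laplacian on a connected graph: a negative minimum of \<open>u - v\<close> would
  spread along edges to the nonempty set \<open>V - V'\<close>, where \<open>u - v \<ge> 0\<close>.\<close>

lemma square_system_solvable:
  fixes a :: "nat \<Rightarrow> nat \<Rightarrow> real"
  assumes kernel_trivial:
    "\<And>g. \<forall>i\<in>{1..n}. (\<Sum>k\<in>{1..n}. a i k * g k) = 0 \<Longrightarrow> \<forall>i\<in>{1..n}. g i = 0"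
  shows "\<exists>g. \<forall>i\<in>{1..n}. (\<Sum>k\<in>{1..n}. a i k * g k) = b i"
proof -
  define A :: "real mat" where "A = mat n n (\<lambda>(i, k). a (Suc i) (Suc k))"
  have A: "A \<in> carrier_mat n n" by (simp add: A_def)
  have row: "vec_index (A *\<^sub>v x) i = (\<Sum>k\<in>{1..n}. a (Suc i) k * vec_index x (k - 1))"
    if "x \<in> carrier_vec n" "i < n" for x i
  proof -
    have "vec_index (A *\<^sub>v x) i = (\<Sum>k<n. a (Suc i) (Suc k) * vec_index x k)"
      using that by (simp add: A_def scalar_prod_def atLeast0LessThan)
    also have "\<dots> = (\<Sum>k\<in>{Suc 0..<Suc n}. a (Suc i) k * vec_index x (k - 1))"
      by (simp only: sum.shift_bounds_Suc_ivl atLeast0LessThan diff_Suc_1)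
    finally show ?thesis by (simp add: atLeastLessThanSuc_atLeastAtMost)
  qed
  have "det A \<noteq> 0"
  proof
    assume "det A = 0"
    then obtain x where x: "x \<in> carrier_vec n" "x \<noteq> 0\<^sub>v n" "A *\<^sub>v x = 0\<^sub>v n"
      using det_0_iff_vec_prod_zero_field[OF A] by blast
    have "\<forall>i\<in>{1..n}. (\<Sum>k\<in>{1..n}. a i k * vec_index x (k - 1)) = 0"
    proof
      fix i :: nat assume i: "i \<in> {1..n}"
      have i': "i - 1 < n" using i by auto
      then have "vec_index (A *\<^sub>v x) (i - 1) = 0" using x(3) by simp
      then show "(\<Sum>k\<in>{1..n}. a i k * vec_index x (k - 1)) = 0" using row[OF x(1) i'] i by simp
    qed
    then have zero: "\<forall>i\<in>{1..n}. vec_index x (i - 1) = 0" by (rule kernel_trivial)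
    have "vec_index x i = 0" if "i < n" for i using zero[rule_format, of "Suc i"] that by simp
    then have "x = 0\<^sub>v n" using x(1) by (intro eq_vecI) auto
    with x(2) show False ..
  qed
  then have "A \<in> Units (ring_mat TYPE(real) n ())" by (rule det_non_zero_imp_unit[OF A])
  then obtain B where B: "B \<in> carrier_mat n n" "A * B = 1\<^sub>m n"
    by (auto simp: Units_def ring_mat_def)
  define y where "y = vec n (\<lambda>i. b (Suc i))"
  define x where "x = B *\<^sub>v y"
  have y: "y \<in> carrier_vec n" by (simp add: y_def)
  have x: "x \<in> carrier_vec n" using B(1) y by (simp add: x_def)
  have Ax: "A *\<^sub>v x = y"
    using assoc_mult_mat_vec[OF A B(1) y, symmetric] B(2) y by (simp add: x_def)
  have "\<forall>i\<in>{1..n}. (\<Sum>k\<in>{1..n}. a i k * vec_index x (k - 1)) = b i"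
  proof
    fix i :: nat assume i: "i \<in> {1..n}"
    then have i': "i - 1 < n" by auto
    then have "vec_index (A *\<^sub>v x) (i - 1) = b i" using Ax i by (simp add: y_def)
    then show "(\<Sum>k\<in>{1..n}. a i k * vec_index x (k - 1)) = b i" using row[OF x i'] i by simp
  qed
  then show ?thesis by (rule exI[of _ "\<lambda>k. vec_index x (k - 1)"])
qed

lemma finite_Vset [simp]: "finite (Vset n)"
  by (simp add: Vset_def)

locale weighted_graph =
  fixes n :: nat and w :: "nat \<Rightarrow> nat \<Rightarrow> real" and r :: real
  assumes graph: "is_graph n w"
begin

abbreviation V :: "nat set" where "V \<equiv> Vset n"

lemma w_sym: "i \<in> V \<Longrightarrow> j \<in> V \<Longrightarrow> w i j = w j i"
  and w_nonneg: "i \<in> V \<Longrightarrow> j \<in> V \<Longrightarrow> 0 \<le> w i j"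
  and w_diag: "i \<in> V \<Longrightarrow> w i i = 0"
  and reachable: "i \<in> V \<Longrightarrow> j \<in> V \<Longrightarrow> (i, j) \<in> {(a, b). a \<in> V \<and> b \<in> V \<and> 0 < w a b}\<^sup>*"
  using graph unfolding is_graph_def by auto

lemma V_nonempty: "V \<noteq> {}"
  using graph by (auto simp: is_graph_def Vset_def)

lemma deg_pos:
  assumes i: "i \<in> V"
  shows "0 < deg n w i"
proof -
  define j where "j = (if i = 1 then 2 else (1::nat))"
  have j: "j \<in> V" "j \<noteq> i"
    using graph i by (auto simp: is_graph_def Vset_def j_def)
  obtain k where k: "k \<in> V" "0 < w i k"
    using reachable[OF i j(1)] j(2) by (cases rule: converse_rtranclE) auto
  have "w i k \<le> deg n w i"
    unfolding deg_def by (rule member_le_sum) (use k i w_nonneg in auto)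
  with k show ?thesis by simp
qed

lemma deg_powr_pos: "i \<in> V \<Longrightarrow> 0 < deg n w i powr a"
  using deg_pos[of i] by simp

lemma vol_pos: "0 < vol n w r"
  unfolding vol_def using V_nonempty by (intro sum_pos) (auto dest: deg_pos)

lemma minimum_spreads:
  fixes c :: "nat \<Rightarrow> nat \<Rightarrow> real" and g :: "nat \<Rightarrow> real"
  assumes c_nonneg: "\<And>i k. i \<in> V \<Longrightarrow> k \<in> V \<Longrightarrow> i \<noteq> k \<Longrightarrow> 0 \<le> c i k"
    and c_pos: "\<And>i k. i \<in> V \<Longrightarrow> k \<in> V \<Longrightarrow> 0 < w i k \<Longrightarrow> 0 < c i k"
    and i0: "i0 \<in> V" "\<forall>k\<in>V. g i0 \<le> g k"
    and super: "\<And>i. i \<in> V \<Longrightarrow> g i = g i0 \<Longrightarrow> 0 \<le> (\<Sum>k\<in>V. c i k * (g i - g k))"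
  shows "\<forall>j\<in>V. g j = g i0"
proof
  have step: "g k = g i0" if i: "i \<in> V" "g i = g i0" and k: "k \<in> V" "0 < w i k" for i k
  proof -
    have nonpos: "\<forall>l\<in>V. c i l * (g i - g l) \<le> 0"
      using c_nonneg[OF i(1)] i0(2) i(2) by (metis diff_le_0_iff_le mult_nonneg_nonpos mult_zero_right diff_self)
    then have "(\<Sum>l\<in>V. c i l * (g i - g l)) \<le> 0" by (intro sum_nonpos) auto
    then have "(\<Sum>l\<in>V. - (c i l * (g i - g l))) = 0"
      using super[OF i] by (simp add: sum_negf)
    then have "c i k * (g i - g k) = 0"
      using nonpos k(1) by (subst (asm) sum_nonneg_eq_0_iff) auto
    then show ?thesis using c_pos[OF i(1) k] i(2) by simp
  qed
  fix j assume j: "j \<in> V"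
  have "(i0, j) \<in> {(a, b). a \<in> V \<and> b \<in> V \<and> 0 < w a b}\<^sup>*" by (rule reachable[OF i0(1) j])
  then show "g j = g i0"
    by (induction rule: rtrancl_induct) (use step in auto)
qed

lemma minimum_principle:
  fixes c :: "nat \<Rightarrow> nat \<Rightarrow> real" and g :: "nat \<Rightarrow> real"
  assumes c_nonneg: "\<And>i k. i \<in> V \<Longrightarrow> k \<in> V \<Longrightarrow> i \<noteq> k \<Longrightarrow> 0 \<le> c i k"
    and c_pos: "\<And>i k. i \<in> V \<Longrightarrow> k \<in> V \<Longrightarrow> 0 < w i k \<Longrightarrow> 0 < c i k"
    and boundary_nonempty: "V - T \<noteq> {}"
    and super: "\<And>i. i \<in> T \<inter> V \<Longrightarrow> 0 \<le> (\<Sum>k\<in>V. c i k * (g i - g k))"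
    and boundary: "\<And>i. i \<in> V - T \<Longrightarrow> 0 \<le> g i"
  shows "\<forall>i\<in>V. 0 \<le> g i"
proof (rule ccontr)
  assume "\<not> ?thesis"
  then obtain j where j: "j \<in> V" "g j < 0" by (auto simp: not_le)
  obtain i0 where i0: "i0 \<in> V" "\<forall>k\<in>V. g i0 \<le> g k"
    using ex_is_arg_min_if_finite[OF finite_Vset V_nonempty, of g] by (auto simp: is_arg_min_linorder)
  have neg: "g i0 < 0" using i0 j by fastforce
  have "\<forall>k\<in>V. g k = g i0"
  proof (rule minimum_spreads[OF c_nonneg c_pos i0])
    fix i assume "i \<in> V" "g i = g i0"
    with neg boundary have "i \<in> T \<inter> V" by fastforce
    then show "0 \<le> (\<Sum>k\<in>V. c i k * (g i - g k))" by (rule super)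
  qed
  moreover obtain b where "b \<in> V - T" using boundary_nonempty by blast
  ultimately show False using boundary neg by fastforce
qed

lemma lap_eq_sum: "lap n w r g i = (\<Sum>k\<in>V. deg n w i powr (-r) * w i k * (g i - g k))"
  unfolding lap_def by (simp add: sum_distrib_left mult.assoc)

lemma lap_coeff_nonneg: "i \<in> V \<Longrightarrow> k \<in> V \<Longrightarrow> 0 \<le> deg n w i powr (-r) * w i k"
  using w_nonneg by simp

lemma lap_coeff_pos: "i \<in> V \<Longrightarrow> 0 < w i k \<Longrightarrow> 0 < deg n w i powr (-r) * w i k"
  using deg_powr_pos by simp

lemma lap_cong: "i \<in> V \<Longrightarrow> (\<And>k. k \<in> V \<Longrightarrow> f k = g k) \<Longrightarrow> lap n w r f i = lap n w r g i"
  unfolding lap_def by simp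

lemma lap_diff: "lap n w r (\<lambda>x. f x - g x) i = lap n w r f i - lap n w r g i"
  unfolding lap_def by (simp add: sum_subtractf[symmetric] right_diff_distrib[symmetric] algebra_simps)

lemma lap_uminus: "lap n w r (\<lambda>x. - g x) i = - lap n w r g i"
  using lap_diff[of "\<lambda>_. 0" g i] by (simp add: lap_def)

lemma lap_sum:
  "lap n w r (\<lambda>x. \<Sum>j\<in>J. a j * F j x) i = (\<Sum>j\<in>J. a j * lap n w r (F j) i)"
proof -
  have "lap n w r (\<lambda>x. \<Sum>j\<in>J. a j * F j x) i
      = (\<Sum>k\<in>V. \<Sum>j\<in>J. a j * (deg n w i powr (-r) * w i k * (F j i - F j k)))"
    unfolding lap_eq_sum
    by (intro sum.cong refl) (simp add: sum_subtractf[symmetric] sum_distrib_left algebra_simps)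
  also have "\<dots> = (\<Sum>j\<in>J. a j * lap n w r (F j) i)"
    unfolding lap_eq_sum by (subst sum.swap) (simp add: sum_distrib_left)
  finally show ?thesis .
qed

lemma lap_avg: "i \<in> V \<Longrightarrow> lap n w r (avg n w r g) i = 0"
  unfolding lap_def avg_def by simp

lemma mass_lap: "mass n w r (lap n w r g) = 0"
proof -
  have "mass n w r (lap n w r g) = (\<Sum>i\<in>V. \<Sum>k\<in>V. w i k * (g i - g k))"
    unfolding mass_def
  proof (intro sum.cong refl)
    fix i assume "i \<in> V"
    then have "deg n w i powr r * deg n w i powr (-r) = 1" using deg_pos[of i] by (simp add: powr_minus)
    then show "deg n w i powr r * lap n w r g i = (\<Sum>k\<in>V. w i k * (g i - g k))"
      unfolding lap_def by (simp add: mult.assoc[symmetric])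
  qed
  also have "\<dots> = (\<Sum>i\<in>V. \<Sum>k\<in>V. w i k * g i) - (\<Sum>i\<in>V. \<Sum>k\<in>V. w i k * g k)"
    by (simp add: right_diff_distrib sum_subtractf)
  also have "(\<Sum>i\<in>V. \<Sum>k\<in>V. w i k * g k) = (\<Sum>k\<in>V. \<Sum>i\<in>V. w i k * g k)"
    by (rule sum.swap)
  also have "(\<Sum>k\<in>V. \<Sum>i\<in>V. w i k * g k) = (\<Sum>k\<in>V. \<Sum>i\<in>V. w k i * g k)"
    by (intro sum.cong refl) (simp add: w_sym)
  finally show ?thesis by simp
qed

lemma harmonic_with_zero_boundary:
  assumes boundary_nonempty: "V - T \<noteq> {}"
    and harmonic: "\<And>i. i \<in> T \<inter> V \<Longrightarrow> lap n w r g i = 0"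
    and boundary: "\<And>i. i \<in> V - T \<Longrightarrow> g i = 0"
  shows "\<forall>i\<in>V. g i = 0"
proof -
  have "\<forall>i\<in>V. 0 \<le> h i"
    if "\<And>i. i \<in> T \<inter> V \<Longrightarrow> lap n w r h i = 0" "\<And>i. i \<in> V - T \<Longrightarrow> h i = 0" for h
    by (rule minimum_principle[OF lap_coeff_nonneg lap_coeff_pos boundary_nonempty])
      (use that in \<open>auto simp: lap_eq_sum\<close>)
  from this[of g] this[of "\<lambda>x. - g x"] show ?thesis
    using harmonic boundary by (force simp: lap_uminus)
qed

lemma dirichlet_solvable:
  assumes S: "S \<subseteq> V" "V - S \<noteq> {}"
  shows "\<exists>\<nu>. (\<forall>i\<in>S. lap n w r \<nu> i = b i) \<and> (\<forall>i. i \<notin> S \<longrightarrow> \<nu> i = 0)"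
proof -
  define a where "a i k = (if i \<in> S
    then deg n w i powr (-r) * ((if k = i then deg n w i else 0) - w i k)
    else (if k = i then 1 else 0))" for i k
  have rows: "(\<Sum>k\<in>V. a i k * g k) = (if i \<in> S then lap n w r g i else g i)"
    if i: "i \<in> V" for i g
  proof (cases "i \<in> S")
    case True
    let ?d = "deg n w i powr (-r)"
    have "(\<Sum>k\<in>V. a i k * g k)
        = (\<Sum>k\<in>V. (if k = i then ?d * deg n w i * g k else 0) - ?d * w i k * g k)"
      by (intro sum.cong refl) (simp add: a_def True right_diff_distrib left_diff_distrib)
    also have "\<dots> = (\<Sum>k\<in>V. if k = i then ?d * deg n w i * g k else 0) - (\<Sum>k\<in>V. ?d * w i k * g k)"
      by (rule sum_subtractf)
    also have "\<dots> = ?d * (deg n w i * g i - (\<Sum>k\<in>V. w i k * g k))"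
      using i by (simp add: sum_distrib_left mult.assoc right_diff_distrib)
    also have "\<dots> = lap n w r g i"
      unfolding lap_def deg_def by (simp add: right_diff_distrib sum_subtractf sum_distrib_right)
    finally show ?thesis using True by simp
  next
    case False
    have "(\<Sum>k\<in>V. a i k * g k) = (\<Sum>k\<in>V. if k = i then g k else 0)"
      by (intro sum.cong) (auto simp: a_def False)
    then show ?thesis using False i by simp
  qed
  have "\<exists>g. \<forall>i\<in>V. (\<Sum>k\<in>V. a i k * g k) = (if i \<in> S then b i else 0)"
  proof (unfold Vset_def, rule square_system_solvable)
    fix g :: "nat \<Rightarrow> real" assume "\<forall>i\<in>{1..n}. (\<Sum>k\<in>{1..n}. a i k * g k) = 0"
    then have "\<forall>i\<in>V. (\<Sum>k\<in>V. a i k * g k) = 0" by (simp add: Vset_def)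
    then have "\<forall>i\<in>V. g i = 0"
      using S by (intro harmonic_with_zero_boundary[OF S(2)]) (auto simp: rows)
    then show "\<forall>i\<in>{1..n}. g i = 0" by (simp add: Vset_def)
  qed
  then obtain g where g: "\<forall>i\<in>V. (if i \<in> S then lap n w r g i else g i) = (if i \<in> S then b i else 0)"
    by (auto simp: rows)
  have "lap n w r (\<lambda>i. if i \<in> S then g i else 0) i = b i" if "i \<in> S" for i
    using g that S(1) by (subst lap_cong[where g = g]) (auto split: if_splits)
  then show ?thesis by (intro exI[of _ "\<lambda>i. if i \<in> S then g i else 0"]) simp
qed

lemma eqmeas_solves:
  assumes S: "S \<subseteq> V" "V - S \<noteq> {}"
  shows "(\<forall>i\<in>S. lap n w r (eqmeas n w r S) i = 1) \<and> (\<forall>i. i \<notin> S \<longrightarrow> eqmeas n w r S i = 0)"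
proof -
  let ?P = "\<lambda>\<nu>. (\<forall>i\<in>S. lap n w r \<nu> i = 1) \<and> (\<forall>i. i \<notin> S \<longrightarrow> \<nu> i = 0)"
  obtain \<nu> where \<nu>: "?P \<nu>" using dirichlet_solvable[OF S, of "\<lambda>_. 1"] by blast
  have uniq: "\<mu> = \<nu>" if \<mu>: "?P \<mu>" for \<mu>
  proof
    fix x
    have zero: "\<forall>i\<in>V. \<mu> i - \<nu> i = 0"
    proof (rule harmonic_with_zero_boundary[OF S(2), where g = "\<lambda>x. \<mu> x - \<nu> x"])
      fix i assume "i \<in> S \<inter> V"
      then show "lap n w r (\<lambda>x. \<mu> x - \<nu> x) i = 0" using \<mu> \<nu> by (simp add: lap_diff)
    next
      fix i assume "i \<in> V - S"
      then show "\<mu> i - \<nu> i = 0" using \<mu> \<nu> by simp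
    qed
    show "\<mu> x = \<nu> x"
      using zero \<mu> \<nu> S(1) by (cases "x \<in> S") auto
  qed
  show ?thesis unfolding eqmeas_def by (rule theI[of ?P \<nu>, OF \<nu> uniq])
qed

lemma fj_eq: "fj n w r j = (\<lambda>i. eqmeas n w r (V - {j}) i - avg n w r (eqmeas n w r (V - {j})) i)"
  by (simp add: fj_def Let_def)

lemma lap_fj: "x \<in> V \<Longrightarrow> lap n w r (fj n w r j) x = lap n w r (eqmeas n w r (V - {j})) x"
  unfolding fj_eq lap_diff by (simp add: lap_avg)

lemma mass_avg: "mass n w r (avg n w r g) = mass n w r g"
proof -
  have "mass n w r (avg n w r g) = vol n w r * (mass n w r g / vol n w r)"
    unfolding mass_def[of _ _ _ "avg n w r g"] by (simp add: avg_def vol_def sum_distrib_right sum_divide_distrib)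
  then show ?thesis using vol_pos by simp
qed

lemma mass_fj: "mass n w r (fj n w r j) = 0"
  unfolding fj_eq mass_def by (simp add: right_diff_distrib sum_subtractf mass_def[symmetric] mass_avg)

definition deg_share :: "nat \<Rightarrow> real" where
  "deg_share j = deg n w j powr r / vol n w r"

lemma sum_deg_share: "(\<Sum>j\<in>V. g j * deg_share j) = mass n w r g / vol n w r"
  unfolding deg_share_def mass_def by (simp add: sum_divide_distrib mult.commute)

text \<open>At \<open>x = j\<close> the value of \<open>\<Delta>\<nu>\<close> is forced by \<open>\<M>(\<Delta>\<nu>) = 0\<close>.\<close>

lemma deg_share_lap_fj:
  assumes j: "j \<in> V" and x: "x \<in> V"
  shows "deg_share j * lap n w r (fj n w r j) x = deg_share j - (if x = j then 1 else 0)"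
proof -
  let ?\<nu> = "eqmeas n w r (V - {j})"
  have \<nu>: "\<forall>i\<in>V - {j}. lap n w r ?\<nu> i = 1"
    using eqmeas_solves[of "V - {j}"] j by blast
  show ?thesis
  proof (cases "x = j")
    case True
    have "0 = deg n w j powr r * lap n w r ?\<nu> j + (\<Sum>i\<in>V - {j}. deg n w i powr r * lap n w r ?\<nu> i)"
      using mass_lap[of ?\<nu>, unfolded mass_def] j by (simp add: sum.remove)
    also have "(\<Sum>i\<in>V - {j}. deg n w i powr r * lap n w r ?\<nu> i) = vol n w r - deg n w j powr r"
      using \<nu> j by (simp add: vol_def sum_diff1)
    finally have "deg n w j powr r * lap n w r ?\<nu> j = deg n w j powr r - vol n w r" by simp
    then show ?thesis
      using True x vol_pos by (simp add: lap_fj deg_share_def diff_divide_distrib)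
  next
    case False
    then show ?thesis using \<nu> x by (simp add: lap_fj)
  qed
qed

definition solves_phi :: "(nat \<Rightarrow> real) \<Rightarrow> (nat \<Rightarrow> real) \<Rightarrow> bool" where
  "solves_phi u p \<longleftrightarrow> (\<forall>i\<in>V. lap n w r p i = u i - avg n w r u i)
     \<and> mass n w r p = 0 \<and> (\<forall>i. i \<notin> V \<longrightarrow> p i = 0)"

lemma solves_phi_unique:
  assumes p: "solves_phi u p" and q: "solves_phi u q"
  shows "p = q"
proof -
  define h where "h x = p x - q x" for x
  have harmonic: "lap n w r h i = 0" if "i \<in> V" for i
    using p q that unfolding h_def lap_diff by (simp add: solves_phi_def)
  obtain i0 where i0: "i0 \<in> V" "\<forall>k\<in>V. h i0 \<le> h k"
    using ex_is_arg_min_if_finite[OF finite_Vset V_nonempty, of h] by (auto simp: is_arg_min_linorder)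
  have const: "\<forall>k\<in>V. h k = h i0"
  proof (rule minimum_spreads[where c = "\<lambda>i k. deg n w i powr (-r) * w i k",
        OF lap_coeff_nonneg lap_coeff_pos i0])
    fix i assume "i \<in> V"
    then show "0 \<le> (\<Sum>k\<in>V. deg n w i powr (-r) * w i k * (h i - h k))"
      using harmonic[of i] by (simp add: lap_eq_sum)
  qed
  have "mass n w r h = mass n w r p - mass n w r q"
    unfolding mass_def h_def by (simp add: right_diff_distrib sum_subtractf)
  then have "0 = mass n w r h" using p q by (simp add: solves_phi_def)
  also have "\<dots> = vol n w r * h i0"
    using const by (simp add: mass_def vol_def sum_distrib_right)
  finally have "h i0 = 0" using vol_pos by simp
  with const p q show "p = q"
    by (intro ext) (metis h_def eq_iff_diff_eq_0 solves_phi_def)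
qed

definition phi_expansion :: "(nat \<Rightarrow> real) \<Rightarrow> nat \<Rightarrow> real" where
  "phi_expansion u i = (if i \<in> V then - (\<Sum>j\<in>V. u j * deg_share j * fj n w r j i) else 0)"

lemma solves_phi_expansion: "solves_phi u (phi_expansion u)"
proof -
  have "lap n w r (phi_expansion u) x = u x - avg n w r u x" if x: "x \<in> V" for x
  proof -
    have "lap n w r (phi_expansion u) x
        = lap n w r (\<lambda>i. \<Sum>j\<in>V. (- u j * deg_share j) * fj n w r j i) x"
      using x by (intro lap_cong) (simp_all add: phi_expansion_def sum_negf[symmetric])
    also have "\<dots> = (\<Sum>j\<in>V. (- u j) * (deg_share j * lap n w r (fj n w r j) x))"
      unfolding lap_sum by (simp add: mult.assoc)
    also have "\<dots> = (\<Sum>j\<in>V. (- u j) * (deg_share j - (if x = j then 1 else 0)))"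
      by (intro sum.cong refl) (simp add: deg_share_lap_fj x)
    also have "\<dots> = (\<Sum>j\<in>V. - u j * deg_share j) + (\<Sum>j\<in>V. if j = x then u j else 0)"
      unfolding sum.distrib[symmetric] by (intro sum.cong refl) (auto simp: right_diff_distrib)
    also have "\<dots> = u x - mass n w r u / vol n w r"
      using x by (simp add: sum_negf sum_deg_share)
    finally show ?thesis using x by (simp add: avg_def)
  qed
  moreover have "mass n w r (phi_expansion u) = 0"
  proof -
    have "mass n w r (phi_expansion u)
        = (\<Sum>i\<in>V. \<Sum>j\<in>V. - (u j * deg_share j * (deg n w i powr r * fj n w r j i)))"
      unfolding mass_def phi_expansion_def
      by (intro sum.cong refl) (simp add: sum_distrib_left sum_negf[symmetric] mult_ac)
    also have "\<dots> = (\<Sum>j\<in>V. \<Sum>i\<in>V. - (u j * deg_share j * (deg n w i powr r * fj n w r j i)))"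
      by (rule sum.swap)
    also have "\<dots> = - (\<Sum>j\<in>V. u j * deg_share j * mass n w r (fj n w r j))"
      unfolding mass_def by (simp add: sum_distrib_left sum_negf)
    finally show ?thesis by (simp add: mass_fj)
  qed
  ultimately show ?thesis by (simp add: solves_phi_def phi_expansion_def)
qed

lemma phi_eq_expansion: "phi n w r u = phi_expansion u"
  unfolding phi_def solves_phi_def[symmetric]
  by (rule the_equality) (fact solves_phi_expansion, erule solves_phi_unique[OF _ solves_phi_expansion])

lemma sum_deg_share_fj:
  assumes i: "i \<in> V"
  shows "(\<Sum>j\<in>V. deg_share j * fj n w r j i) = 0"
proof -
  have "solves_phi (\<lambda>_. 1) (\<lambda>_. 0)"
    using vol_pos[unfolded vol_def] by (simp add: solves_phi_def avg_def lap_def mass_def vol_def)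
  then have "phi_expansion (\<lambda>_. 1) = (\<lambda>_. 0)"
    by (rule solves_phi_unique[OF solves_phi_expansion])
  then have "phi_expansion (\<lambda>_. 1) i = 0" by simp
  with i show ?thesis by (simp add: phi_expansion_def)
qed

definition L_coeff :: "real \<Rightarrow> nat \<Rightarrow> nat \<Rightarrow> real" where
  "L_coeff \<gamma> i k = deg n w i powr (-r) * w i k + \<gamma> * deg_share k * fj n w r k i"

lemma Lop_eq_sum:
  assumes i: "i \<in> V"
  shows "Lop n w r \<gamma> u i = (\<Sum>k\<in>V. L_coeff \<gamma> i k * (u i - u k))"
proof -
  have "phi n w r u i = u i * (\<Sum>k\<in>V. deg_share k * fj n w r k i) - (\<Sum>k\<in>V. u k * deg_share k * fj n w r k i)"
    using i by (simp add: phi_eq_expansion phi_expansion_def sum_deg_share_fj)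
  also have "\<dots> = (\<Sum>k\<in>V. deg_share k * fj n w r k i * (u i - u k))"
    unfolding sum_distrib_left sum_subtractf[symmetric] by (intro sum.cong refl) (simp add: algebra_simps)
  finally have "\<gamma> * phi n w r u i = (\<Sum>k\<in>V. \<gamma> * deg_share k * fj n w r k i * (u i - u k))"
    by (simp add: sum_distrib_left mult.assoc)
  then show ?thesis
    unfolding Lop_def lap_eq_sum L_coeff_def
    by (simp only: sum.distrib[symmetric]) (intro sum.cong refl; simp add: distrib_right)
qed

theorem comparison_principle:
  assumes coeff_nonneg: "\<And>i k. i \<in> V \<Longrightarrow> k \<in> V \<Longrightarrow> i \<noteq> k \<Longrightarrow> 0 \<le> L_coeff \<gamma> i k"
    and coeff_pos: "\<And>i k. i \<in> V \<Longrightarrow> k \<in> V \<Longrightarrow> 0 < w i k \<Longrightarrow> 0 < L_coeff \<gamma> i k"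
    and V': "V' \<subset> V"
    and interior: "\<forall>i\<in>V'. Lop n w r \<gamma> v i \<le> Lop n w r \<gamma> u i"
    and boundary: "\<forall>i\<in>V - V'. v i \<le> u i"
  shows "\<forall>i\<in>V. v i \<le> u i"
proof -
  have "\<forall>i\<in>V. 0 \<le> u i - v i"
  proof (rule minimum_principle[OF coeff_nonneg coeff_pos])
    show "V - V' \<noteq> {}" using V' by blast
  next
    fix i assume i: "i \<in> V' \<inter> V"
    have "(\<Sum>k\<in>V. L_coeff \<gamma> i k * ((u i - v i) - (u k - v k))) = Lop n w r \<gamma> u i - Lop n w r \<gamma> v i"
      using i unfolding Lop_eq_sum[OF IntD2[OF i]] sum_subtractf[symmetric]
      by (intro sum.cong refl) (simp add: algebra_simps)
    then show "0 \<le> (\<Sum>k\<in>V. L_coeff \<gamma> i k * ((u i - v i) - (u k - v k)))"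
      using interior i by simp
  qed (use boundary in auto)
  then show ?thesis by simp
qed

lemma deg_share_nonneg: "k \<in> V \<Longrightarrow> 0 \<le> deg_share k"
  using deg_powr_pos[of k r] vol_pos by (simp add: deg_share_def)

lemma L_coeff_pos:
  assumes C: "classC n w r \<gamma>" and i: "i \<in> V" and k: "k \<in> V" and w_pos: "0 < w i k"
  shows "0 < L_coeff \<gamma> i k"
proof (cases "\<gamma> = 0")
  case True
  then show ?thesis by (simp add: L_coeff_def lap_coeff_pos i w_pos)
next
  case False
  have "i \<noteq> k" using w_diag[OF i] w_pos by auto
  with C i k have "w i k = 0 \<or> 0 < deg n w i powr (- r) * w i k
      + \<gamma> * deg n w k powr r / vol n w r * fj n w r k i"
    unfolding classC_def if_not_P[OF False] by blast
  with w_pos show ?thesis by (simp add: L_coeff_def deg_share_def)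
qed

lemma L_coeff_nonneg:
  assumes C: "classC n w r \<gamma>" and \<gamma>: "0 \<le> \<gamma>" and i: "i \<in> V" and k: "k \<in> V" and ik: "i \<noteq> k"
  shows "0 \<le> L_coeff \<gamma> i k"
proof -
  consider "\<gamma> = 0" | "0 < w i k" | "\<gamma> \<noteq> 0" "w i k = 0"
    using w_nonneg[OF i k] by fastforce
  then show ?thesis
  proof cases
    case 1
    then show ?thesis by (simp add: L_coeff_def lap_coeff_nonneg i k)
  next
    case 2
    then show ?thesis using L_coeff_pos[OF C i k] by simp
  next
    case 3
    then have "classC0 n w r" using C by (simp add: classC_def)
    with 3 i k ik have "0 \<le> fj n w r k i" unfolding classC0_def by fastforce
    with 3 \<gamma> deg_share_nonneg[OF k] show ?thesis by (simp add: L_coeff_def)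
  qed
qed

end

lemma classC_is_graph: "classC n w r \<gamma> \<Longrightarrow> is_graph n w"
  by (simp add: classC_def classC0_def split: if_splits)

theorem lemma6p25:
  fixes n :: nat and w :: "nat \<Rightarrow> nat \<Rightarrow> real" and r \<gamma> :: real
    and V' :: "nat set" and u v :: "nat \<Rightarrow> real"
  assumes "0 \<le> r" and "r \<le> 1"
    and "\<gamma> \<ge> 0"
    and "classC n w r \<gamma>"
    and "V' \<subset> Vset n"
    and "\<forall>i\<in>V'. Lop n w r \<gamma> u i \<ge> Lop n w r \<gamma> v i"
    and "\<forall>i\<in>Vset n - V'. u i \<ge> v i"
  shows "\<forall>i\<in>Vset n. u i \<ge> v i"
proof -
  interpret weighted_graph n w r
    using classC_is_graph[OF assms(4)] by unfold_locales
  show ?thesis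
    using comparison_principle[OF L_coeff_nonneg[OF assms(4,3)] L_coeff_pos[OF assms(4)] assms(5-7)]
    by simp
qed

end
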